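(* For $n\ge1$, $$\left|\Pi_n \wr C_2 (1^11^1, 1^11^2, 1^21^1)\right|=\left|\Pi_n \wr C_2 (1^11^2, 1^21^1, 1^12^1)\right|=\left|\Pi_n \wr C_2 (1^12^1, 1^12^2, 1^22^1)\right|=2^n.$$
   Context: For $n\ge0$ let $[n]=\{1,\dots,n\}$. A $2$-colored set partition of $[n]$ is a set partition of $[n]$ together with an assignment of a color from $\{1,2\}$ to each element; $\Pi_n\wr C_2$ is the set of these. For a set $S$ of patterns, $\Pi_n\wr C_2(S)$ is the set of such colored partitions avoiding every pattern in $S$ in the pattern sense. For the patterns used here: $\sigma$ contains $1^11^1$ iff two elements in the same block have the same color; $1^11^2$ iff there are $i<j$ in the same block with $i$ colored $1$ and $j$ colored $2$; $1^21^1$ iff there are $i<j$ in the same block with $i$ colored $2$ and $j$ colored $1$; $1^12^1$ iff two elements in different blocks have the same color; $1^12^2$ iff there are $i<j$ in different blocks with $i$ colored $1$ and $j$ colored $2$; $1^22^1$ iff there are $i<j$ in different blocks with $i$ colored $2$ and $j$ colored $1$. *)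

theory Defs
  imports "HOL-Library.Disjoint_Sets" "HOL-Library.FuncSet"
begin

type_synonym colored_partition = "nat set set \<times> (nat \<Rightarrow> nat)"

definition colored_partitions :: "nat \<Rightarrow> colored_partition set" where
  "colored_partitions n = {(P, c). partition_on {1..n} P \<and> c \<in> {1..n} \<rightarrow>\<^sub>E {1, 2}}"

definition same_block :: "nat set set \<Rightarrow> nat \<Rightarrow> nat \<Rightarrow> bool" where
  "same_block P i j \<longleftrightarrow> (\<exists>B\<in>P. i \<in> B \<and> j \<in> B)"

definition diff_blocks :: "nat set set \<Rightarrow> nat \<Rightarrow> nat \<Rightarrow> bool" where
  "diff_blocks P i j \<longleftrightarrow> i \<in> \<Union>P \<and> j \<in> \<Union>P \<and> \<not> same_block P i j"

text \<open>The six patterns; constructor Pab_cd stands for 1^a b^c... precisely: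
  P11_11 = 1^1 1^1, P11_12 = 1^1 1^2, P12_11 = 1^2 1^1,
  P11_21 = 1^1 2^1, P11_22 = 1^1 2^2, P12_21 = 1^2 2^1.\<close>

datatype pattern = P11_11 | P11_12 | P12_11 | P11_21 | P11_22 | P12_21

fun contains :: "colored_partition \<Rightarrow> pattern \<Rightarrow> bool" where
  "contains (P, c) P11_11 \<longleftrightarrow> (\<exists>i j. i < j \<and> same_block P i j \<and> c i = c j)"
| "contains (P, c) P11_12 \<longleftrightarrow> (\<exists>i j. i < j \<and> same_block P i j \<and> c i = 1 \<and> c j = 2)"
| "contains (P, c) P12_11 \<longleftrightarrow> (\<exists>i j. i < j \<and> same_block P i j \<and> c i = 2 \<and> c j = 1)"
| "contains (P, c) P11_21 \<longleftrightarrow> (\<exists>i j. i < j \<and> diff_blocks P i j \<and> c i = c j)"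
| "contains (P, c) P11_22 \<longleftrightarrow> (\<exists>i j. i < j \<and> diff_blocks P i j \<and> c i = 1 \<and> c j = 2)"
| "contains (P, c) P12_21 \<longleftrightarrow> (\<exists>i j. i < j \<and> diff_blocks P i j \<and> c i = 2 \<and> c j = 1)"

definition avoiding :: "nat \<Rightarrow> pattern set \<Rightarrow> colored_partition set" where
  "avoiding n S = {\<sigma> \<in> colored_partitions n. \<forall>p\<in>S. \<not> contains \<sigma> p}"

end

theory Submission
  imports Defs
begin

(* In each of the three cases, avoidance forces the partition to be determined by the colouring c:
   two elements of [n] share a block iff they are equal, iff they have the same colour, and always,
   respectively. So in each case the avoiding coloured partitions are the pairs ([n] // ker, c), where
   ker is the kernel of a key function depending only on c, one for each of the 2^n colourings. *)

lemma same_block_sym: "same_block P i j \<longleftrightarrow> same_block P j i"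
  unfolding same_block_def by blast

lemma same_block_refl: "i \<in> \<Union>P \<Longrightarrow> same_block P i i"
  unfolding same_block_def by blast

lemma same_block_in_Union: "same_block P i j \<Longrightarrow> i \<in> \<Union>P \<and> j \<in> \<Union>P"
  unfolding same_block_def by blast

lemma diff_blocks_sym: "diff_blocks P i j \<longleftrightarrow> diff_blocks P j i"
  unfolding diff_blocks_def using same_block_sym by blast

lemma diff_blocks_imp_neq: "diff_blocks P i j \<Longrightarrow> i \<noteq> j"
  unfolding diff_blocks_def using same_block_refl by blast

lemma same_block_quotient_iff:
  assumes r: "equiv A r"
  shows "same_block (A // r) i j \<longleftrightarrow> (i, j) \<in> r"
proof
  assume "same_block (A // r) i j"
  then obtain x where "(x, i) \<in> r" "(x, j) \<in> r"
    unfolding same_block_def by (auto elim: quotientE)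
  with r show "(i, j) \<in> r"
    by (meson equivE symD transD)
next
  assume ij: "(i, j) \<in> r"
  with r have "i \<in> A"
    using equiv_type by blast
  with r ij show "same_block (A // r) i j"
    unfolding same_block_def by (blast intro: quotientI equiv_class_self)
qed

lemma partition_on_eq_quotient_iff:
  assumes P: "partition_on A P" and r: "equiv A r"
  shows "P = A // r \<longleftrightarrow> (\<forall>i\<in>A. \<forall>j\<in>A. same_block P i j \<longleftrightarrow> (i, j) \<in> r)"
proof
  assume same_block_iff: "\<forall>i\<in>A. \<forall>j\<in>A. same_block P i j \<longleftrightarrow> (i, j) \<in> r"
  have "{(i, j). same_block P i j} = r"
  proof safe
    fix i j assume "same_block P i j"
    with same_block_iff show "(i, j) \<in> r"
      using same_block_in_Union partition_onD1[OF P] by blast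
  next
    fix i j assume "(i, j) \<in> r"
    with same_block_iff show "same_block P i j"
      using equiv_type[OF r] by blast
  qed
  then show "P = A // r"
    using partition_on_eq_quotient[OF P] unfolding same_block_def by simp
qed (simp add: same_block_quotient_iff[OF r])

lemma equiv_kernel_on: "equiv A (kernel f \<inter> A \<times> A)"
  unfolding equiv_def kernel_def refl_on_def sym_def trans_def by auto

lemma partition_on_eq_quotient_kernel_iff:
  assumes "partition_on A P"
  shows "P = A // (kernel f \<inter> A \<times> A) \<longleftrightarrow> (\<forall>i\<in>A. \<forall>j\<in>A. same_block P i j \<longleftrightarrow> f i = f j)"
  using partition_on_eq_quotient_iff[OF assms equiv_kernel_on] by (simp add: kernel_def)

lemma colored_partitionsD:
  assumes "(P, c) \<in> colored_partitions n"
  shows "partition_on {1..n} P" "\<Union>P = {1..n}" "c ` \<Union>P \<subseteq> {1, 2}"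
  using assms partition_onD1 unfolding colored_partitions_def by auto

lemma card_avoiding_if_blocks_are_fibres:
  fixes key :: "(nat \<Rightarrow> nat) \<Rightarrow> nat \<Rightarrow> 'b"
  assumes avoids_iff: "\<And>P c. (P, c) \<in> colored_partitions n \<Longrightarrow>
      (\<forall>p\<in>S. \<not> contains (P, c) p) \<longleftrightarrow>
      (\<forall>i\<in>{1..n}. \<forall>j\<in>{1..n}. same_block P i j \<longleftrightarrow> key c i = key c j)"
  shows "card (avoiding n S) = 2 ^ n"
proof -
  define blocks where "blocks c = {1..n} // (kernel (key c) \<inter> {1..n} \<times> {1..n})" for c
  have same_block_blocks: "same_block (blocks c) i j \<longleftrightarrow> i \<in> {1..n} \<and> j \<in> {1..n} \<and> key c i = key c j"
    for c i j
    unfolding blocks_def same_block_quotient_iff[OF equiv_kernel_on] by (auto simp: kernel_def)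
  have "avoiding n S = (\<lambda>c. (blocks c, c)) ` ({1..n} \<rightarrow>\<^sub>E {1, 2})"
  proof safe
    fix P c assume "(P, c) \<in> avoiding n S"
    then have Pc: "(P, c) \<in> colored_partitions n" and "\<forall>p\<in>S. \<not> contains (P, c) p"
      unfolding avoiding_def by auto
    then have "P = blocks c"
      unfolding blocks_def avoids_iff[OF Pc]
      using partition_on_eq_quotient_kernel_iff[OF colored_partitionsD(1)[OF Pc]] by blast
    with Pc show "(P, c) \<in> (\<lambda>c. (blocks c, c)) ` ({1..n} \<rightarrow>\<^sub>E {1, 2})"
      unfolding colored_partitions_def by auto
  next
    fix c :: "nat \<Rightarrow> nat" assume c: "c \<in> {1..n} \<rightarrow>\<^sub>E {1, 2}"
    then have "(blocks c, c) \<in> colored_partitions n"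
      unfolding colored_partitions_def blocks_def by (simp add: partition_on_quotient equiv_kernel_on)
    with avoids_iff[OF this] show "(blocks c, c) \<in> avoiding n S"
      unfolding avoiding_def by (simp add: same_block_blocks)
  qed
  moreover have "inj_on (\<lambda>c. (blocks c, c)) ({1..n} \<rightarrow>\<^sub>E {1, 2})"
    by (rule inj_onI) simp
  ultimately have "card (avoiding n S) = card ({1..n} \<rightarrow>\<^sub>E {1::nat, 2})"
    by (simp add: card_image)
  also have "\<dots> = 2 ^ n"
    by (simp add: card_PiE numeral_2_eq_2)
  finally show ?thesis .
qed

lemma contains_P11_11_P11_12_P12_11_iff:
  assumes "c ` \<Union>P \<subseteq> {1, 2}"
  shows "contains (P, c) P11_11 \<or> contains (P, c) P11_12 \<or> contains (P, c) P12_11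
     \<longleftrightarrow> (\<exists>i j. i \<noteq> j \<and> same_block P i j)"
proof
  assume "\<exists>i j. i \<noteq> j \<and> same_block P i j"
  then obtain i j where ij: "i < j" "same_block P i j"
    by (metis linorder_neq_iff same_block_sym)
  moreover have "c i \<in> {1, 2}" "c j \<in> {1, 2}"
    using assms same_block_in_Union[OF ij(2)] by blast+
  ultimately show "contains (P, c) P11_11 \<or> contains (P, c) P11_12 \<or> contains (P, c) P12_11"
    by (simp only: contains.simps) (metis empty_iff insert_iff)
next
  assume "contains (P, c) P11_11 \<or> contains (P, c) P11_12 \<or> contains (P, c) P12_11"
  then show "\<exists>i j. i \<noteq> j \<and> same_block P i j"
    by (simp only: contains.simps) (metis less_irrefl)
qed

lemma contains_P11_12_P12_11_iff:
  assumes "c ` \<Union>P \<subseteq> {1, 2}"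
  shows "contains (P, c) P11_12 \<or> contains (P, c) P12_11
     \<longleftrightarrow> (\<exists>i j. same_block P i j \<and> c i \<noteq> c j)"
proof
  assume "\<exists>i j. same_block P i j \<and> c i \<noteq> c j"
  then obtain i j where ij: "i < j" "same_block P i j" "c i \<noteq> c j"
    by (metis linorder_neq_iff same_block_sym)
  moreover have "c i \<in> {1, 2}" "c j \<in> {1, 2}"
    using assms same_block_in_Union[OF ij(2)] by blast+
  ultimately show "contains (P, c) P11_12 \<or> contains (P, c) P12_11"
    by (simp only: contains.simps) (metis empty_iff insert_iff)
next
  assume "contains (P, c) P11_12 \<or> contains (P, c) P12_11"
  then show "\<exists>i j. same_block P i j \<and> c i \<noteq> c j"
    by (simp only: contains.simps) (metis numeral_One num.distinct(1) numeral_eq_iff)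
qed

lemma contains_P11_21_iff:
  "contains (P, c) P11_21 \<longleftrightarrow> (\<exists>i j. diff_blocks P i j \<and> c i = c j)"
proof
  assume "\<exists>i j. diff_blocks P i j \<and> c i = c j"
  then obtain i j where "i < j" "diff_blocks P i j" "c i = c j"
    by (metis linorder_neq_iff diff_blocks_sym diff_blocks_imp_neq)
  then show "contains (P, c) P11_21"
    by auto
qed auto

lemma contains_P11_21_P11_22_P12_21_iff:
  assumes "c ` \<Union>P \<subseteq> {1, 2}"
  shows "contains (P, c) P11_21 \<or> contains (P, c) P11_22 \<or> contains (P, c) P12_21
     \<longleftrightarrow> (\<exists>i j. diff_blocks P i j)"
proof
  assume "\<exists>i j. diff_blocks P i j"
  then obtain i j where ij: "i < j" "diff_blocks P i j"
    by (metis linorder_neq_iff diff_blocks_sym diff_blocks_imp_neq)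
  moreover have "c i \<in> {1, 2}" "c j \<in> {1, 2}"
    using assms ij(2) unfolding diff_blocks_def by blast+
  ultimately show "contains (P, c) P11_21 \<or> contains (P, c) P11_22 \<or> contains (P, c) P12_21"
    by (simp only: contains.simps) (metis empty_iff insert_iff)
next
  assume "contains (P, c) P11_21 \<or> contains (P, c) P11_22 \<or> contains (P, c) P12_21"
  then show "\<exists>i j. diff_blocks P i j"
    by (simp only: contains.simps) blast
qed

lemma card_avoiding_P11_11_P11_12_P12_11: "card (avoiding n {P11_11, P11_12, P12_11}) = 2 ^ n"
proof (rule card_avoiding_if_blocks_are_fibres[where key = "\<lambda>_ i. i"])
  fix P c assume Pc: "(P, c) \<in> colored_partitions n"
  have "(\<forall>p\<in>{P11_11, P11_12, P12_11}. \<not> contains (P, c) p) \<longleftrightarrow> \<not> (\<exists>i j. i \<noteq> j \<and> same_block P i j)"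
    using colored_partitionsD(3)[OF Pc]
    by (simp only: ball_simps simp_thms de_Morgan_disj[symmetric] contains_P11_11_P11_12_P12_11_iff)
  also have "\<dots> \<longleftrightarrow> (\<forall>i\<in>{1..n}. \<forall>j\<in>{1..n}. same_block P i j \<longleftrightarrow> i = j)"
    using colored_partitionsD(2)[OF Pc] by (metis same_block_in_Union same_block_refl)
  finally show "(\<forall>p\<in>{P11_11, P11_12, P12_11}. \<not> contains (P, c) p)
      \<longleftrightarrow> (\<forall>i\<in>{1..n}. \<forall>j\<in>{1..n}. same_block P i j \<longleftrightarrow> i = j)" .
qed

lemma card_avoiding_P11_12_P12_11_P11_21: "card (avoiding n {P11_12, P12_11, P11_21}) = 2 ^ n"
proof (rule card_avoiding_if_blocks_are_fibres[where key = "\<lambda>c. c"])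
  fix P c assume Pc: "(P, c) \<in> colored_partitions n"
  have "(\<forall>p\<in>{P11_12, P12_11, P11_21}. \<not> contains (P, c) p) \<longleftrightarrow>
      \<not> (\<exists>i j. same_block P i j \<and> c i \<noteq> c j) \<and> \<not> (\<exists>i j. diff_blocks P i j \<and> c i = c j)"
    using colored_partitionsD(3)[OF Pc]
    by (simp only: ball_simps simp_thms de_Morgan_disj[symmetric] disj_assoc[symmetric]
        contains_P11_12_P12_11_iff contains_P11_21_iff)
  also have "\<dots> \<longleftrightarrow> (\<forall>i\<in>{1..n}. \<forall>j\<in>{1..n}. same_block P i j \<longleftrightarrow> c i = c j)"
    using colored_partitionsD(2)[OF Pc] unfolding diff_blocks_def by (metis same_block_in_Union)
  finally show "(\<forall>p\<in>{P11_12, P12_11, P11_21}. \<not> contains (P, c) p)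
      \<longleftrightarrow> (\<forall>i\<in>{1..n}. \<forall>j\<in>{1..n}. same_block P i j \<longleftrightarrow> c i = c j)" .
qed

lemma card_avoiding_P11_21_P11_22_P12_21: "card (avoiding n {P11_21, P11_22, P12_21}) = 2 ^ n"
proof (rule card_avoiding_if_blocks_are_fibres[where key = "\<lambda>_ _. ()"])
  fix P c assume Pc: "(P, c) \<in> colored_partitions n"
  have "(\<forall>p\<in>{P11_21, P11_22, P12_21}. \<not> contains (P, c) p) \<longleftrightarrow> \<not> (\<exists>i j. diff_blocks P i j)"
    using colored_partitionsD(3)[OF Pc]
    by (simp only: ball_simps simp_thms de_Morgan_disj[symmetric] contains_P11_21_P11_22_P12_21_iff)
  also have "\<dots> \<longleftrightarrow> (\<forall>i\<in>{1..n}. \<forall>j\<in>{1..n}. same_block P i j \<longleftrightarrow> () = ())"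
    using colored_partitionsD(2)[OF Pc] unfolding diff_blocks_def by blast
  finally show "(\<forall>p\<in>{P11_21, P11_22, P12_21}. \<not> contains (P, c) p)
      \<longleftrightarrow> (\<forall>i\<in>{1..n}. \<forall>j\<in>{1..n}. same_block P i j \<longleftrightarrow> () = ())" .
qed

theorem mainTheorem13:
  fixes n :: nat
  assumes "n \<ge> 1"
  shows "card (avoiding n {P11_11, P11_12, P12_11}) = 2 ^ n
       \<and> card (avoiding n {P11_12, P12_11, P11_21}) = 2 ^ n
       \<and> card (avoiding n {P11_21, P11_22, P12_21}) = 2 ^ n"
  using card_avoiding_P11_11_P11_12_P12_11 card_avoiding_P11_12_P12_11_P11_21
    card_avoiding_P11_21_P11_22_P12_21 by blast

end
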